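(* Let $\sigma_0,\sigma_\epsilon>0$ with $\sigma_0\neq\sigma_\epsilon$, $\theta_0\in\mathbb{R}$, prior $\Theta\sim\mathrm{Laplace}(\theta_0,\sigma_0)$, signal $X=\Theta+\epsilon$ with $\epsilon\sim\mathrm{Laplace}(0,\sigma_\epsilon)$ independent of $\Theta$, and let $\theta_1(x)=\mathbb{E}[\Theta\mid X=x]$. Then the DeGroot coefficient $\omega=\frac{d\theta_1}{dx}\big|_{x=\theta_0}$ is $$\omega=\frac{\sigma_0}{\sigma_0+\sigma_\epsilon}.$$
   Context: $\mathrm{Laplace}(\mu,s)$ has density $t\mapsto\frac{1}{2s}e^{-|t-\mu|/s}$. The posterior mean is $\theta_1(x)=\frac{\int\theta f_\Theta(\theta)l_\epsilon(x-\theta)d\theta}{\int f_\Theta(\theta)l_\epsilon(x-\theta)d\theta}$. *)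

theory Defs
  imports "HOL-Analysis.Analysis"
begin

definition laplace_density :: "real \<Rightarrow> real \<Rightarrow> real \<Rightarrow> real" where
  "laplace_density mu s t = exp (- \<bar>t - mu\<bar> / s) / (2 * s)"

definition posterior_mean :: "real \<Rightarrow> real \<Rightarrow> real \<Rightarrow> real \<Rightarrow> real" where
  "posterior_mean theta0 sigma0 sigmaeps x =
     (\<integral>\<theta>. \<theta> * laplace_density theta0 sigma0 \<theta> * laplace_density 0 sigmaeps (x - \<theta>) \<partial>lborel) /
     (\<integral>\<theta>. laplace_density theta0 sigma0 \<theta> * laplace_density 0 sigmaeps (x - \<theta>) \<partial>lborel)"

end

(* Write a = sigma0, b = sigmaeps and y = x - theta0. Substituting theta = theta0 + u turns the
   posterior mean into theta0 + M(y) / D(y), where D and M are the mass and the first moment of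
   the weight exp(-|u|/a) exp(-|y - u|/b). At y = 0 the weight is even in u, so M(0) = 0 and the
   derivative of M/D at 0 is M'(0) / D(0); only continuity of D is needed. Since exp is
   1-Lipschitz on the nonpositive reals, the difference quotients of the integrand of M are
   dominated by |u| exp(-|u|/a) / b, so M may be differentiated under the integral sign:
   M'(0) = (1/b) * integral of |u| exp(-c|u|) = 2 / (b c^2) with c = 1/a + 1/b, while
   D(0) = 2 / c. Hence omega = 1 / (b c) = a / (a + b). *)

theory Submission
  imports Defs "HOL-Probability.Distributions"
begin

lemma nn_integral_lborel_abs:
  fixes f :: "real \<Rightarrow> ennreal"
  assumes [measurable]: "f \<in> borel_measurable borel"
  shows "(\<integral>\<^sup>+u. f \<bar>u\<bar> \<partial>lborel) = 2 * (\<integral>\<^sup>+u. f u * indicator {0..} u \<partial>lborel)"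
proof -
  have "(\<integral>\<^sup>+u. f \<bar>u\<bar> \<partial>lborel)
      = (\<integral>\<^sup>+u. f \<bar>u\<bar> * indicator {0..} u + f \<bar>u\<bar> * indicator {..0} u \<partial>lborel)"
    by (rule nn_integral_cong_AE)
      (use AE_lborel_singleton[of "0::real"] in \<open>auto split: split_indicator\<close>)
  also have "\<dots> = (\<integral>\<^sup>+u. f \<bar>u\<bar> * indicator {0..} u \<partial>lborel)
      + (\<integral>\<^sup>+u. f \<bar>u\<bar> * indicator {..0} u \<partial>lborel)"
    by (rule nn_integral_add) auto
  also have "(\<integral>\<^sup>+u. f \<bar>u\<bar> * indicator {..0} u \<partial>lborel)
      = (\<integral>\<^sup>+u. f \<bar>-u\<bar> * indicator {..0} (-u) \<partial>lborel)"
    using nn_integral_real_affine[of "\<lambda>u. f \<bar>u\<bar> * indicator {..0} u" "-1" 0] by simp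
  also have "(\<lambda>u. f \<bar>-u\<bar> * indicator {..0} (-u)) = (\<lambda>u::real. f \<bar>u\<bar> * indicator {0..} u)"
    by (auto split: split_indicator)
  also have "(\<lambda>u. f \<bar>u\<bar> * indicator {0..} u) = (\<lambda>u::real. f u * indicator {0..} u)"
    by (auto split: split_indicator)
  finally show ?thesis
    by (simp add: mult_2)
qed

lemma nn_integral_power_exp_Ici:
  assumes "0 < c"
  shows "(\<integral>\<^sup>+u. ennreal (u ^ k * exp (- c * u)) * indicator {0..} u \<partial>lborel)
    = ennreal (fact k / c ^ (k + 1))"
proof -
  have "(\<lambda>u. ennreal (u ^ k * exp (- c * u)) * indicator {0..} u)
      = (\<lambda>u. ennreal (1 / c) * ennreal (erlang_density 0 c u * u ^ k))"
    using assms by (auto simp: fun_eq_iff erlang_density_def ennreal_mult'[symmetric] split: split_indicator)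
  then have "(\<integral>\<^sup>+u. ennreal (u ^ k * exp (- c * u)) * indicator {0..} u \<partial>lborel)
      = ennreal (1 / c) * ennreal (fact k / c ^ k)"
    using nn_integral_erlang_ith_moment[OF assms, of 0 k] by (simp add: nn_integral_cmult)
  also have "\<dots> = ennreal (fact k / c ^ (k + 1))"
    using assms by (simp add: ennreal_mult'[symmetric])
  finally show ?thesis .
qed

lemma has_bochner_integral_abs_power_exp:
  fixes c :: real
  assumes "0 < c"
  shows "has_bochner_integral lborel (\<lambda>u. \<bar>u\<bar> ^ k * exp (- c * \<bar>u\<bar>)) (2 * fact k / c ^ (k + 1))"
proof (rule has_bochner_integral_nn_integral)
  have "(\<integral>\<^sup>+u. ennreal (\<bar>u\<bar> ^ k * exp (- c * \<bar>u\<bar>)) \<partial>lborel)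
      = 2 * (\<integral>\<^sup>+u. ennreal (u ^ k * exp (- c * u)) * indicator {0..} u \<partial>lborel)"
    by (rule nn_integral_lborel_abs[of "\<lambda>v. ennreal (v ^ k * exp (- c * v))"]) measurable
  also have "\<dots> = ennreal (2 * fact k / c ^ (k + 1))"
    using assms by (subst nn_integral_power_exp_Ici)
      (simp_all add: times_divide_eq_right[symmetric] ennreal_mult flip: ennreal_numeral
        del: times_divide_eq_right)
  finally show "(\<integral>\<^sup>+u. ennreal (\<bar>u\<bar> ^ k * exp (- c * \<bar>u\<bar>)) \<partial>lborel)
      = ennreal (2 * fact k / c ^ (k + 1))" .
qed (use assms in auto)

lemma lborel_integral_odd_eq_0:
  fixes f :: "real \<Rightarrow> 'a::{banach, second_countable_topology}"
  assumes "\<And>u. f (- u) = - f u"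
  shows "(\<integral>u. f u \<partial>lborel) = 0"
proof -
  have "(\<integral>u. f u \<partial>lborel) = (\<integral>u. f (- u) \<partial>lborel)"
    using lborel_integral_real_affine[of "-1" f 0] by simp
  then have "(\<integral>u. f u \<partial>lborel) + (\<integral>u. f u \<partial>lborel) = 0"
    by (simp add: assms eq_neg_iff_add_eq_0)
  then show ?thesis
    by (simp flip: scaleR_2)
qed

lemma integral_dominated_convergence_at:
  fixes F :: "'a::first_countable_topology \<Rightarrow> 'b \<Rightarrow> 'c::{banach, second_countable_topology}"
  assumes "f \<in> borel_measurable M" "\<And>y. F y \<in> borel_measurable M" "integrable M w"
    and lim: "AE u in M. ((\<lambda>y. F y u) \<longlongrightarrow> f u) (at x)"
    and bound: "\<And>y. y \<noteq> x \<Longrightarrow> AE u in M. norm (F y u) \<le> w u"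
  shows "((\<lambda>y. \<integral>u. F y u \<partial>M) \<longlongrightarrow> (\<integral>u. f u \<partial>M)) (at x)"
  unfolding tendsto_at_iff_sequentially comp_def
proof (intro allI impI)
  fix X assume X: "\<forall>i. X i \<in> UNIV - {x}" "X \<longlonglongrightarrow> x"
  show "(\<lambda>i. \<integral>u. F (X i) u \<partial>M) \<longlonglongrightarrow> (\<integral>u. f u \<partial>M)"
  proof (rule integral_dominated_convergence)
    show "AE u in M. (\<lambda>i. F (X i) u) \<longlonglongrightarrow> f u"
      using lim by eventually_elim (use X in \<open>auto simp: tendsto_at_iff_sequentially comp_def\<close>)
    show "AE u in M. norm (F (X i) u) \<le> w u" for i
      using X by (intro bound) auto
  qed (use assms in auto)
qed

lemma has_real_derivative_integral:
  fixes F :: "real \<Rightarrow> 'a \<Rightarrow> real"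
  assumes int: "\<And>y. integrable M (F y)" and "F' \<in> borel_measurable M" "integrable M w"
    and deriv: "AE u in M. ((\<lambda>y. F y u) has_real_derivative F' u) (at x)"
    and bound: "\<And>y. y \<noteq> x \<Longrightarrow> AE u in M. \<bar>(F y u - F x u) / (y - x)\<bar> \<le> w u"
  shows "((\<lambda>y. \<integral>u. F y u \<partial>M) has_real_derivative (\<integral>u. F' u \<partial>M)) (at x)"
proof -
  have "(\<integral>u. F y u \<partial>M) - (\<integral>u. F x u \<partial>M) = (\<integral>u. F y u - F x u \<partial>M)" for y
    using int by simp
  then have quotient: "((\<integral>u. F y u \<partial>M) - (\<integral>u. F x u \<partial>M)) / (y - x)
      = (\<integral>u. (F y u - F x u) / (y - x) \<partial>M)" for y
    by simp
  have "((\<lambda>y. \<integral>u. (F y u - F x u) / (y - x) \<partial>M) \<longlongrightarrow> (\<integral>u. F' u \<partial>M)) (at x)"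
  proof (rule integral_dominated_convergence_at)
    show "AE u in M. ((\<lambda>y. (F y u - F x u) / (y - x)) \<longlongrightarrow> F' u) (at x)"
      using deriv by eventually_elim (simp add: has_field_derivative_iff)
    show "AE u in M. norm ((F y u - F x u) / (y - x)) \<le> w u" if "y \<noteq> x" for y
      using bound[OF that] by (simp only: real_norm_def)
  qed (use assms borel_measurable_integrable in auto)
  then show ?thesis
    by (simp add: has_field_derivative_iff quotient)
qed

lemma DERIV_divide_vanishing:
  fixes f g :: "real \<Rightarrow> real"
  assumes "(f has_real_derivative D) (at x)" "f x = 0" "isCont g x" "g x \<noteq> 0"
  shows "((\<lambda>y. f y / g y) has_real_derivative D / g x) (at x)"
proof -
  have "((\<lambda>y. ((f y - f x) / (y - x)) / g y) \<longlongrightarrow> D / g x) (at x)"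
    using assms by (intro tendsto_divide) (auto simp: has_field_derivative_iff isCont_def)
  then show ?thesis
    using assms(2) by (simp add: has_field_derivative_iff mult.commute)
qed

lemma abs_exp_diff_le_nonpos:
  fixes s t :: real
  assumes "s \<le> 0" "t \<le> 0"
  shows "\<bar>exp s - exp t\<bar> \<le> \<bar>s - t\<bar>"
proof -
  have *: "exp s - exp t \<le> s - t" if "t \<le> s" "s \<le> 0" for s t :: real
  proof -
    have "exp s - exp t = exp s * (1 - exp (t - s))"
      by (simp add: algebra_simps exp_diff)
    also have "\<dots> \<le> 1 * (s - t)"
    proof (rule mult_mono)
      show "1 - exp (t - s) \<le> s - t"
        using exp_ge_add_one_self[of "t - s"] by linarith
    qed (use that in auto)
    finally show ?thesis by simp
  qed
  show ?thesis
    using *[of s t] *[of t s] assms by (cases "t \<le> s") auto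
qed

lemma has_real_derivative_abs:
  fixes z :: real
  assumes "z \<noteq> 0"
  shows "(abs has_real_derivative sgn z) (at z)"
proof (cases "0 < z")
  case True
  have "(abs has_real_derivative 1) (at z)"
    by (rule has_field_derivative_transform_within_open[OF DERIV_ident, where S="{0<..}"])
      (use True in auto)
  with True show ?thesis by simp
next
  case False
  with assms have "z < 0" by simp
  have "(abs has_real_derivative -1) (at z)"
    by (rule has_field_derivative_transform_within_open[OF DERIV_minus[OF DERIV_ident], where S="{..<0}"])
      (use \<open>z < 0\<close> in auto)
  with \<open>z < 0\<close> show ?thesis by simp
qed

(* Up to the factor 1 / (4 a b), the joint density of (Theta - theta0, X - theta0) at (u, y)
   for a = sigma0 and b = sigmaeps. *)
definition posterior_weight :: "real \<Rightarrow> real \<Rightarrow> real \<Rightarrow> real \<Rightarrow> real" where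
  "posterior_weight a b y u = exp (- \<bar>u\<bar> / a) * exp (- \<bar>y - u\<bar> / b)"

definition weight_mass :: "real \<Rightarrow> real \<Rightarrow> real \<Rightarrow> real" where
  "weight_mass a b y = (\<integral>u. posterior_weight a b y u \<partial>lborel)"

definition weight_moment :: "real \<Rightarrow> real \<Rightarrow> real \<Rightarrow> real" where
  "weight_moment a b y = (\<integral>u. u * posterior_weight a b y u \<partial>lborel)"

lemma borel_measurable_posterior_weight [measurable]:
  "posterior_weight a b y \<in> borel_measurable borel"
  unfolding posterior_weight_def by measurable

lemma posterior_weight_0: "posterior_weight a b 0 u = exp (- (1 / a + 1 / b) * \<bar>u\<bar>)"
  by (simp add: posterior_weight_def exp_add[symmetric] field_simps)

lemma weight_moment_0: "weight_moment a b 0 = 0"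
  unfolding weight_moment_def posterior_weight_0 by (rule lborel_integral_odd_eq_0) simp

context
  fixes a b :: real
  assumes a: "0 < a" and b: "0 < b"
begin

lemma posterior_weight_le: "posterior_weight a b y u \<le> exp (- \<bar>u\<bar> / a)"
  using b by (simp add: posterior_weight_def mult_le_cancel_left1)

lemma posterior_weight_lipschitz:
  "\<bar>posterior_weight a b y u - posterior_weight a b z u\<bar> \<le> exp (- \<bar>u\<bar> / a) * (\<bar>y - z\<bar> / b)"
proof -
  have "\<bar>exp (- \<bar>y - u\<bar> / b) - exp (- \<bar>z - u\<bar> / b)\<bar> \<le> \<bar>- \<bar>y - u\<bar> / b - - \<bar>z - u\<bar> / b\<bar>"
    by (rule abs_exp_diff_le_nonpos) (use b in auto)
  also have "\<dots> = \<bar>\<bar>z - u\<bar> - \<bar>y - u\<bar>\<bar> / b"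
    using b by (simp add: field_simps)
  also have "\<dots> \<le> \<bar>y - z\<bar> / b"
    using b by (intro divide_right_mono) auto
  finally have "\<bar>exp (- \<bar>y - u\<bar> / b) - exp (- \<bar>z - u\<bar> / b)\<bar> \<le> \<bar>y - z\<bar> / b" .
  then show ?thesis
    unfolding posterior_weight_def right_diff_distrib[symmetric] abs_mult abs_exp_cancel
    by (rule mult_left_mono) simp
qed

lemma integrable_posterior_weight: "integrable lborel (posterior_weight a b y)"
proof (rule Bochner_Integration.integrable_bound)
  show "integrable lborel (\<lambda>u. exp (- \<bar>u\<bar> / a))"
    using has_bochner_integral_abs_power_exp[of "1 / a" 0] a by (auto simp: has_bochner_integral_iff)
  show "AE u in lborel. norm (posterior_weight a b y u) \<le> norm (exp (- \<bar>u\<bar> / a))"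
    using posterior_weight_le by (simp add: posterior_weight_def)
qed simp

lemma integrable_moment_posterior_weight: "integrable lborel (\<lambda>u. u * posterior_weight a b y u)"
proof (rule Bochner_Integration.integrable_bound)
  show "integrable lborel (\<lambda>u. \<bar>u\<bar> * exp (- \<bar>u\<bar> / a))"
    using has_bochner_integral_abs_power_exp[of "1 / a" 1] a by (auto simp: has_bochner_integral_iff)
  show "AE u in lborel. norm (u * posterior_weight a b y u) \<le> norm (\<bar>u\<bar> * exp (- \<bar>u\<bar> / a))"
    using posterior_weight_le by (auto simp: abs_mult posterior_weight_def intro!: mult_left_mono)
qed simp

lemma weight_mass_0: "weight_mass a b 0 = 2 / (1 / a + 1 / b)"
  using has_bochner_integral_abs_power_exp[of "1 / a + 1 / b" 0] a b add_pos_pos[of "1 / a" "1 / b"]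
  by (simp add: weight_mass_def posterior_weight_0 has_bochner_integral_iff)

lemma weight_mass_pos: "0 < weight_mass a b y"
proof -
  have pos: "0 < posterior_weight a b y u" for u
    by (simp add: posterior_weight_def)
  have "\<not> (AE u in lborel. posterior_weight a b y u = 0)"
  proof
    assume "AE u in lborel. posterior_weight a b y u = 0"
    then have "AE u::real in lborel. False"
      by (rule eventually_mono) (metis pos less_irrefl)
    then show False
      using ae_filter_eq_bot_iff[of "lborel :: real measure"] by (simp add: eventually_False)
  qed
  then have "weight_mass a b y \<noteq> 0"
    unfolding weight_mass_def
    using integral_nonneg_eq_0_iff_AE[OF integrable_posterior_weight] pos less_imp_le by blast
  moreover have "0 \<le> weight_mass a b y"
    unfolding weight_mass_def using pos less_imp_le by (intro integral_nonneg_AE) auto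
  ultimately show ?thesis by simp
qed

lemma isCont_weight_mass: "isCont (weight_mass a b) y"
  unfolding isCont_def weight_mass_def
proof (rule integral_dominated_convergence_at[where w = "\<lambda>u. exp (- \<bar>u\<bar> / a)"])
  show "integrable lborel (\<lambda>u. exp (- \<bar>u\<bar> / a))"
    using has_bochner_integral_abs_power_exp[of "1 / a" 0] a by (auto simp: has_bochner_integral_iff)
  show "AE u in lborel. ((\<lambda>z. posterior_weight a b z u) \<longlongrightarrow> posterior_weight a b y u) (at y)"
    using b unfolding posterior_weight_def by (intro AE_I2 tendsto_intros) auto
  show "AE u in lborel. norm (posterior_weight a b z u) \<le> exp (- \<bar>u\<bar> / a)" for z
    using posterior_weight_le by (simp add: posterior_weight_def)
qed auto

lemma moment_integrand_has_derivative:
  assumes "u \<noteq> 0"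
  shows "((\<lambda>y. u * posterior_weight a b y u) has_real_derivative
    \<bar>u\<bar> * exp (- (1 / a + 1 / b) * \<bar>u\<bar>) / b) (at 0)"
proof -
  have "((\<lambda>y. \<bar>y - u\<bar>) has_real_derivative sgn (0 - u) * 1) (at 0)"
    using assms by (intro DERIV_chain2[OF has_real_derivative_abs] derivative_eq_intros) auto
  then have deriv: "((\<lambda>y. u * (exp (- \<bar>u\<bar> / a) * exp (- \<bar>y - u\<bar> / b))) has_real_derivative
      u * (exp (- \<bar>u\<bar> / a) * (exp (- \<bar>0 - u\<bar> / b) * (- (sgn (0 - u) * 1) / b)))) (at 0)"
    using b by (intro derivative_eq_intros) auto
  have derivative_value: "u * (exp (- \<bar>u\<bar> / a) * (exp (- \<bar>0 - u\<bar> / b) * (- (sgn (0 - u) * 1) / b)))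
      = \<bar>u\<bar> * exp (- (1 / a + 1 / b) * \<bar>u\<bar>) / b"
    using b by (simp add: abs_sgn exp_add[symmetric] field_simps)
  show ?thesis
    unfolding posterior_weight_def using deriv[unfolded derivative_value] .
qed

lemma abs_moment_integrand_quotient_le:
  assumes "y \<noteq> z"
  shows "\<bar>(u * posterior_weight a b y u - u * posterior_weight a b z u) / (y - z)\<bar>
    \<le> \<bar>u\<bar> * exp (- \<bar>u\<bar> / a) / b"
proof -
  have "\<bar>(u * posterior_weight a b y u - u * posterior_weight a b z u) / (y - z)\<bar>
      = \<bar>u\<bar> * \<bar>posterior_weight a b y u - posterior_weight a b z u\<bar> / \<bar>y - z\<bar>"
    by (simp add: abs_mult right_diff_distrib[symmetric])
  also have "\<dots> \<le> \<bar>u\<bar> * (exp (- \<bar>u\<bar> / a) * (\<bar>y - z\<bar> / b)) / \<bar>y - z\<bar>"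
    by (intro divide_right_mono mult_left_mono posterior_weight_lipschitz) auto
  also have "\<dots> = \<bar>u\<bar> * exp (- \<bar>u\<bar> / a) / b"
    using assms by simp
  finally show ?thesis .
qed

lemma weight_moment_has_derivative:
  "(weight_moment a b has_real_derivative 2 / (b * (1 / a + 1 / b)\<^sup>2)) (at 0)"
proof -
  define c where "c = 1 / a + 1 / b"
  have c: "0 < c"
    using a b by (simp add: c_def add_pos_pos)
  have "((\<lambda>y. \<integral>u. u * posterior_weight a b y u \<partial>lborel) has_real_derivative
      (\<integral>u. \<bar>u\<bar> * exp (- c * \<bar>u\<bar>) / b \<partial>lborel)) (at 0)"
  proof (rule has_real_derivative_integral[where w = "\<lambda>u. \<bar>u\<bar> * exp (- \<bar>u\<bar> / a) / b"])
    show "integrable lborel (\<lambda>u. \<bar>u\<bar> * exp (- \<bar>u\<bar> / a) / b)"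
      using has_bochner_integral_abs_power_exp[of "1 / a" 1] a by (auto simp: has_bochner_integral_iff)
    show "AE u in lborel. ((\<lambda>y. u * posterior_weight a b y u) has_real_derivative
        \<bar>u\<bar> * exp (- c * \<bar>u\<bar>) / b) (at 0)"
      using AE_lborel_singleton[of 0] by eventually_elim (unfold c_def, rule moment_integrand_has_derivative)
    show "AE u in lborel. \<bar>(u * posterior_weight a b y u - u * posterior_weight a b 0 u) / (y - 0)\<bar>
        \<le> \<bar>u\<bar> * exp (- \<bar>u\<bar> / a) / b" if "y \<noteq> 0" for y
      using that by (intro AE_I2 abs_moment_integrand_quotient_le) simp
  qed (use integrable_moment_posterior_weight in auto)
  moreover have "(\<integral>u. \<bar>u\<bar> * exp (- c * \<bar>u\<bar>) / b \<partial>lborel) = 2 / (b * c\<^sup>2)"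
    using has_bochner_integral_abs_power_exp[OF c, of 1]
    by (simp add: has_bochner_integral_iff power2_eq_square)
  ultimately show ?thesis
    by (simp add: weight_moment_def[abs_def] c_def)
qed

lemma posterior_mean_eq:
  "posterior_mean t0 a b x = t0 + weight_moment a b (x - t0) / weight_mass a b (x - t0)"
proof -
  let ?y = "x - t0"
  have substitute: "(\<integral>\<theta>. g \<theta> \<partial>lborel) = (\<integral>u. g (t0 + u) \<partial>lborel)" for g :: "real \<Rightarrow> real"
    using lborel_integral_real_affine[of 1 g t0] by simp
  have joint_density: "laplace_density t0 a (t0 + u) * laplace_density 0 b (x - (t0 + u))
      = posterior_weight a b ?y u / (4 * a * b)" for u
    by (simp add: laplace_density_def posterior_weight_def algebra_simps)
  have "(\<integral>\<theta>. \<theta> * laplace_density t0 a \<theta> * laplace_density 0 b (x - \<theta>) \<partial>lborel)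
      = (\<integral>u. (t0 + u) * (posterior_weight a b ?y u / (4 * a * b)) \<partial>lborel)"
    by (subst substitute) (simp only: mult.assoc joint_density)
  also have "\<dots> = (t0 * weight_mass a b ?y + weight_moment a b ?y) / (4 * a * b)"
    using integrable_posterior_weight integrable_moment_posterior_weight
    by (simp add: distrib_right weight_mass_def weight_moment_def)
  finally have numerator: "(\<integral>\<theta>. \<theta> * laplace_density t0 a \<theta> * laplace_density 0 b (x - \<theta>) \<partial>lborel)
      = (t0 * weight_mass a b ?y + weight_moment a b ?y) / (4 * a * b)" .
  have denominator: "(\<integral>\<theta>. laplace_density t0 a \<theta> * laplace_density 0 b (x - \<theta>) \<partial>lborel)
      = weight_mass a b ?y / (4 * a * b)"
    by (subst substitute) (simp add: joint_density weight_mass_def)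
  show ?thesis
    unfolding posterior_mean_def numerator denominator
    using a b weight_mass_pos[of ?y] by (simp add: field_simps)
qed

lemma weight_ratio_has_derivative:
  "((\<lambda>y. weight_moment a b y / weight_mass a b y) has_real_derivative a / (a + b)) (at 0)"
proof -
  define c where "c = 1 / a + 1 / b"
  have "0 < c"
    using a b by (simp add: c_def add_pos_pos)
  have "2 / (b * c\<^sup>2) / (2 / c) = 1 / (b * c)"
    using \<open>0 < c\<close> by (simp add: field_simps power2_eq_square)
  also have "b * c = (a + b) / a"
    using a b by (simp add: c_def field_simps)
  finally have derivative_value: "2 / (b * c\<^sup>2) / weight_mass a b 0 = a / (a + b)"
    by (simp add: weight_mass_0 c_def)
  have "((\<lambda>y. weight_moment a b y / weight_mass a b y) has_real_derivative
      2 / (b * c\<^sup>2) / weight_mass a b 0) (at 0)"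
    unfolding c_def using weight_mass_pos[of 0]
    by (intro DERIV_divide_vanishing weight_moment_has_derivative weight_moment_0 isCont_weight_mass) auto
  then show ?thesis
    unfolding derivative_value .
qed

end

theorem mainTheorem12:
  fixes sigma0 sigmaeps theta0 :: real
  assumes "sigma0 > 0" and "sigmaeps > 0" and "sigma0 \<noteq> sigmaeps"
  shows "(posterior_mean theta0 sigma0 sigmaeps has_real_derivative
            sigma0 / (sigma0 + sigmaeps)) (at theta0)"
proof -
  let ?ratio = "\<lambda>y. weight_moment sigma0 sigmaeps y / weight_mass sigma0 sigmaeps y"
  have shifted: "posterior_mean theta0 sigma0 sigmaeps = (\<lambda>x. theta0 + ?ratio (x - theta0))"
    using posterior_mean_eq[OF assms(1,2)] by (simp add: fun_eq_iff)
  have "((\<lambda>x. ?ratio (x - theta0)) has_real_derivative sigma0 / (sigma0 + sigmaeps) * 1) (at theta0)"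
    by (rule DERIV_chain2[where f = ?ratio])
      (use weight_ratio_has_derivative[OF assms(1,2)] in \<open>auto intro!: derivative_eq_intros\<close>)
  then have "((\<lambda>x. theta0 + ?ratio (x - theta0)) has_real_derivative sigma0 / (sigma0 + sigmaeps)) (at theta0)"
    using DERIV_add[OF DERIV_const] by fastforce
  then show ?thesis
    unfolding shifted .
qed

end
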